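(* Let $X$ be a complete CAT(0) space and $T_n:X\to X$ for $n\in\mathbb{N}$, with $F:=\bigcap_{n\in\mathbb{N}}Fix(T_n)\neq\emptyset$. Let $\varphi:[0,\infty)\to[0,\infty)$ be an increasing function vanishing only at $0$, and $(\gamma_n)$ a sequence in $(0,\infty)$ with $\sum_{n=0}^\infty\gamma_n^2=\infty$ having rate of divergence $\theta$. Let $b\in\mathbb{N}$, $p\in F$, and $C$ the closed ball of center $p$ and radius $b$. Assume that for all $n$, $T_n$ is uniformly $(P_2)$ on $C$ with modulus $\gamma_n\varphi$. For $x\in C$ let $x_0:=x$, $x_{n+1}:=T_nx_n$, and suppose the sequence $\left(\frac{d(x_n,x_{n+1})}{\gamma_n}\right)$ is nonincreasing. Then $C\cap F=\{p\}$ and $(x_n)$ converges strongly to $p$ with rate of convergence $$\Psi_{b,\theta,\varphi}(k):=\Sigma_{b,\theta}\left(\left\lceil\frac{2b}{\varphi\left(\frac1{k+1}\right)}\right\rceil\right)+1,\qquad \Sigma_{b,\theta}(k):=\theta(b^2(k+1)^2).$$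
   Context: A geodesic space $(X,d)$ is CAT(0) if for all $z\in X$, all geodesics $\gamma:[a,b]\to X$ and all $t\in[0,1]$, $d^2(z,\gamma((1-t)a+tb))\le(1-t)d^2(z,\gamma(a))+td^2(z,\gamma(b))-t(1-t)d^2(\gamma(a),\gamma(b))$. $T$ is uniformly $(P_2)$ on $C$ with modulus $\phi$ if $T(C)\subseteq C$ and for all $x,y\in C$: $2d^2(Tx,Ty)\le d^2(x,Ty)+d^2(y,Tx)-d^2(x,Tx)-d^2(y,Ty)-2\phi(d(Tx,Ty))$. A rate of divergence for $\sum\gamma_n^2=\infty$ is $\theta:\mathbb{N}\to\mathbb{N}$ with $\sum_{n=0}^{\theta(K)}\gamma_n^2\ge K$ for all $K\in\mathbb{N}$. A rate of convergence of $a_n\to a$ is $\Phi:\mathbb{N}\to\mathbb{N}$ with $d(a_n,a)\le\frac1{k+1}$ for all $k$ and all $n\ge\Phi(k)$. $Fix(T)$ is the fixed point set. *)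

theory Defs
  imports "HOL-Analysis.Analysis"
begin

definition geodesic_on :: "(real \<Rightarrow> 'a::metric_space) \<Rightarrow> real \<Rightarrow> real \<Rightarrow> bool" where
  "geodesic_on g a b \<longleftrightarrow> a \<le> b \<and>
     (\<forall>s\<in>{a..b}. \<forall>t\<in>{a..b}. dist (g s) (g t) = \<bar>s - t\<bar>)"

definition geodesic_space :: "'a::metric_space itself \<Rightarrow> bool" where
  "geodesic_space _ \<longleftrightarrow> (\<forall>x y::'a. \<exists>g. geodesic_on g 0 (dist x y) \<and> g 0 = x \<and> g (dist x y) = y)"

definition CAT0 :: "'a::metric_space itself \<Rightarrow> bool" where
  "CAT0 X \<longleftrightarrow> geodesic_space X \<and>
     (\<forall>(z::'a) g a b (t::real). geodesic_on g a b \<and> 0 \<le> t \<and> t \<le> 1 \<longrightarrow>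
        (dist z (g ((1 - t) * a + t * b)))\<^sup>2 \<le>
          (1 - t) * (dist z (g a))\<^sup>2 + t * (dist z (g b))\<^sup>2 - t * (1 - t) * (dist (g a) (g b))\<^sup>2)"

definition Fix :: "('a \<Rightarrow> 'a) \<Rightarrow> 'a set" where
  "Fix T = {x. T x = x}"

definition uniformly_P2 :: "('a::metric_space \<Rightarrow> 'a) \<Rightarrow> 'a set \<Rightarrow> (real \<Rightarrow> real) \<Rightarrow> bool" where
  "uniformly_P2 T C \<phi> \<longleftrightarrow> T ` C \<subseteq> C \<and>
     (\<forall>x\<in>C. \<forall>y\<in>C. 2 * (dist (T x) (T y))\<^sup>2 \<le>
        (dist x (T y))\<^sup>2 + (dist y (T x))\<^sup>2 - (dist x (T x))\<^sup>2 - (dist y (T y))\<^sup>2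
        - 2 * \<phi> (dist (T x) (T y)))"

definition rate_of_divergence_sq :: "(nat \<Rightarrow> real) \<Rightarrow> (nat \<Rightarrow> nat) \<Rightarrow> bool" where
  "rate_of_divergence_sq \<gamma> \<theta> \<longleftrightarrow> (\<forall>K. (\<Sum>n\<le>\<theta> K. (\<gamma> n)\<^sup>2) \<ge> real K)"

definition Sigma_bt :: "nat \<Rightarrow> (nat \<Rightarrow> nat) \<Rightarrow> nat \<Rightarrow> nat" where
  "Sigma_bt b \<theta> k = \<theta> (b\<^sup>2 * (k + 1)\<^sup>2)"

definition Psi :: "nat \<Rightarrow> (nat \<Rightarrow> nat) \<Rightarrow> (real \<Rightarrow> real) \<Rightarrow> nat \<Rightarrow> nat" where
  "Psi b \<theta> \<phi> k = Sigma_bt b \<theta> (nat \<lceil>2 * real b / \<phi> (1 / (real k + 1))\<rceil>) + 1"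

end

theory Submission
  imports Defs
begin

text \<open>Putting the fixed point p into the (P2) inequality shows that each step of the orbit
  decreases the squared distance to p by the squared step length plus the modulus term.
  Hence the squared step lengths have sum at most b^2. Since the ratios of step length to
  gamma(n) decrease, the divergence rate \<theta> forces the ratio at N = \<theta>(b^2 (M+1)^2) below
  1/(b(M+1)), where M = ceiling(2b / \<phi>(1/(k+1))). The modulus term then gives
  \<phi>(d(x(N+1), p)) \<le> b * ratio < \<phi>(1/(k+1)), and monotonicity of \<phi> and of the distances
  to p yields the rate.\<close>

lemma uniformly_P2_dist_fixed_point:
  assumes "uniformly_P2 T C \<psi>" "p \<in> C" "T p = p" "y \<in> C"
  shows "(dist (T y) p)\<^sup>2 \<le> (dist y p)\<^sup>2 - (dist y (T y))\<^sup>2 - 2 * \<psi> (dist (T y) p)"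
proof -
  have "2 * (dist (T y) (T p))\<^sup>2 \<le> (dist y (T p))\<^sup>2 + (dist p (T y))\<^sup>2
      - (dist y (T y))\<^sup>2 - (dist p (T p))\<^sup>2 - 2 * \<psi> (dist (T y) (T p))"
    using assms(1,2,4) unfolding uniformly_P2_def by blast
  then show ?thesis by (simp add: assms(3) dist_commute)
qed

lemma uniformly_P2_fixed_point_unique:
  assumes "uniformly_P2 T C \<psi>" "p \<in> C" "T p = p" "q \<in> C" "T q = q"
    and "\<forall>t\<ge>0. \<psi> t = 0 \<longleftrightarrow> t = 0" "\<forall>t\<ge>0. \<psi> t \<ge> 0"
  shows "q = p"
proof -
  have "\<psi> (dist q p) \<le> 0"
    using uniformly_P2_dist_fixed_point[OF assms(1-4)] assms(5) by simp
  then show ?thesis using assms(6,7) by (metis order_antisym zero_le_dist dist_eq_0_iff)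
qed

lemma sum_sq_ge_of_decseq_ratio:
  fixes s \<gamma> :: "nat \<Rightarrow> real"
  assumes "decseq (\<lambda>n. s n / \<gamma> n)" "\<And>n. \<gamma> n > 0" "\<And>n. s n \<ge> 0"
  shows "(s N / \<gamma> N)\<^sup>2 * (\<Sum>i\<le>N. (\<gamma> i)\<^sup>2) \<le> (\<Sum>i\<le>N. (s i)\<^sup>2)"
proof -
  have "(s N / \<gamma> N)\<^sup>2 * (\<gamma> i)\<^sup>2 \<le> (s i)\<^sup>2" if "i \<le> N" for i
  proof -
    have "s N / \<gamma> N \<le> s i / \<gamma> i" using assms(1) that by (simp add: decseq_def)
    then have "(s N / \<gamma> N)\<^sup>2 \<le> (s i / \<gamma> i)\<^sup>2"
      using assms(2,3) by (intro power_mono) (auto intro: divide_nonneg_pos)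
    then have "(s N / \<gamma> N)\<^sup>2 * (\<gamma> i)\<^sup>2 \<le> (s i / \<gamma> i)\<^sup>2 * (\<gamma> i)\<^sup>2"
      by (rule mult_right_mono) simp
    then show ?thesis using assms(2)[of i] by (simp add: power_divide)
  qed
  then show ?thesis by (auto simp: sum_distrib_left intro: sum_mono)
qed

lemma mult_lt_of_sq_bounds:
  fixes a r \<epsilon> S M :: real
  assumes "0 \<le> a" "0 < \<epsilon>" "0 < r" "a\<^sup>2 * S \<le> r\<^sup>2" "r\<^sup>2 * (M + 1)\<^sup>2 \<le> S" "r / \<epsilon> \<le> M"
  shows "r * a < \<epsilon>"
proof -
  have "(a * (M + 1))\<^sup>2 * r\<^sup>2 = a\<^sup>2 * (r\<^sup>2 * (M + 1)\<^sup>2)"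
    by (simp add: power_mult_distrib)
  also have "\<dots> \<le> a\<^sup>2 * S" using assms(5) by (simp add: mult_left_mono)
  also have "\<dots> \<le> 1\<^sup>2 * r\<^sup>2" using assms(4) by simp
  finally have "(a * (M + 1))\<^sup>2 \<le> 1\<^sup>2" using assms(3) by simp
  then have "a * (M + 1) \<le> 1" by (rule power2_le_imp_le) simp
  moreover have "r < \<epsilon> * (M + 1)" using assms(2,6) by (simp add: field_simps)
  moreover have "r * (a * (M + 1)) \<le> r"
    using mult_left_mono[OF \<open>a * (M + 1) \<le> 1\<close>, of r] assms(3) by simp
  ultimately have "r * a * (M + 1) < \<epsilon> * (M + 1)" by (simp add: mult.assoc)
  moreover have "M + 1 > 0" using assms(2,3,6) divide_pos_pos[of r \<epsilon>] by linarith
  ultimately show ?thesis by simp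
qed

lemma LIMSEQ_of_rate:
  assumes "\<And>k n. n \<ge> \<Phi> k \<Longrightarrow> dist (X n) L \<le> 1 / (real k + 1)"
  shows "X \<longlonglongrightarrow> L"
proof (rule metric_LIMSEQ_I)
  fix e :: real assume "e > 0"
  then obtain k :: nat where "1 / (real k + 1) < e"
    by (metis nat_approx_posE of_nat_Suc add.commute)
  then show "\<exists>N. \<forall>n\<ge>N. dist (X n) L < e"
    using assms[of k] by (intro exI[of _ "\<Phi> k"]) force
qed

locale P2_orbit =
  fixes T :: "nat \<Rightarrow> 'a::metric_space \<Rightarrow> 'a" and \<gamma> :: "nat \<Rightarrow> real" and \<phi> :: "real \<Rightarrow> real"
    and p :: 'a and r :: real and xs :: "nat \<Rightarrow> 'a"
  assumes P2_step: "\<And>n. uniformly_P2 (T n) (cball p r) (\<lambda>t. \<gamma> n * \<phi> t)"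
    and fixed_point: "\<And>n. T n p = p"
    and weight_pos: "\<And>n. \<gamma> n > 0"
    and modulus_nonneg: "\<And>t. t \<ge> 0 \<Longrightarrow> \<phi> t \<ge> 0"
    and start_in_ball: "xs 0 \<in> cball p r"
    and orbit_Suc: "\<And>n. xs (Suc n) = T n (xs n)"
begin

lemma orbit_in_ball: "xs n \<in> cball p r"
proof (induction n)
  case 0 show ?case using start_in_ball .
next
  case (Suc n)
  moreover have "T n ` cball p r \<subseteq> cball p r" using P2_step[of n] by (simp add: uniformly_P2_def)
  ultimately show ?case using orbit_Suc[of n] by blast
qed

lemma dist_orbit_le: "dist (xs n) p \<le> r"
  using orbit_in_ball[of n] by (simp add: dist_commute)

lemma radius_nonneg: "0 \<le> r"
  using dist_orbit_le[of 0] zero_le_dist[of "xs 0" p] by linarith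

lemma orbit_step:
  "(dist (xs (Suc n)) p)\<^sup>2 \<le> (dist (xs n) p)\<^sup>2 - (dist (xs n) (xs (Suc n)))\<^sup>2
     - 2 * (\<gamma> n * \<phi> (dist (xs (Suc n)) p))"
  using uniformly_P2_dist_fixed_point[OF P2_step _ fixed_point orbit_in_ball, of n n] orbit_Suc[of n]
    radius_nonneg by simp

lemma modulus_term_nonneg: "\<gamma> n * \<phi> (dist (xs (Suc n)) p) \<ge> 0"
  using weight_pos[of n] modulus_nonneg[of "dist (xs (Suc n)) p"] by simp

lemma dist_orbit_Suc_le: "dist (xs (Suc n)) p \<le> dist (xs n) p"
proof (rule power2_le_imp_le)
  show "(dist (xs (Suc n)) p)\<^sup>2 \<le> (dist (xs n) p)\<^sup>2"
    using orbit_step[of n] modulus_term_nonneg[of n]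
      zero_le_power2[of "dist (xs n) (xs (Suc n))"] by linarith
qed simp

lemma dist_orbit_antimono: "m \<le> n \<Longrightarrow> dist (xs n) p \<le> dist (xs m) p"
  by (induction n rule: dec_induct) (simp, metis dist_orbit_Suc_le order_trans)

lemma sum_steps_sq_le: "(\<Sum>i<m. (dist (xs i) (xs (Suc i)))\<^sup>2) \<le> r\<^sup>2"
proof -
  have "(\<Sum>i<m. (dist (xs i) (xs (Suc i)))\<^sup>2) \<le> (dist (xs 0) p)\<^sup>2 - (dist (xs m) p)\<^sup>2"
  proof (induction m)
    case (Suc m)
    then show ?case using orbit_step[of m] modulus_term_nonneg[of m] by simp
  qed simp
  also have "\<dots> \<le> r\<^sup>2"
    using power_mono[OF dist_orbit_le[of 0] zero_le_dist, where n = 2] zero_le_power2[of "dist (xs m) p"]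
    by linarith
  finally show ?thesis .
qed

text \<open>With d = dist (xs n) p and d' = dist (xs (Suc n)) p, the step inequality bounds the
  modulus term by (d^2 - d'^2)/2 = (d - d')(d + d')/2, and d - d' is at most the step
  length by the triangle inequality.\<close>
lemma modulus_term_le_step: "\<gamma> n * \<phi> (dist (xs (Suc n)) p) \<le> r * dist (xs n) (xs (Suc n))"
proof -
  define d d' s where "d = dist (xs n) p" and "d' = dist (xs (Suc n)) p"
    and "s = dist (xs n) (xs (Suc n))"
  have "d - d' \<le> s" using dist_triangle[of "xs n" p "xs (Suc n)"] by (simp add: d_def d'_def s_def)
  moreover have "d' \<le> d" "d \<le> r" "0 \<le> d'" "0 \<le> s"
    unfolding d_def d'_def s_def using dist_orbit_Suc_le[of n] dist_orbit_le[of n] by simp_all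
  ultimately have "(d - d') * (d + d') \<le> s * (2 * r)" by (intro mult_mono) linarith+
  then have "d\<^sup>2 - d'\<^sup>2 \<le> s * (2 * r)" by (simp add: power2_eq_square algebra_simps)
  moreover have "s * (2 * r) = 2 * (r * s)" by simp
  ultimately show ?thesis
    using orbit_step[of n] zero_le_power2[of s] unfolding d_def d'_def s_def by linarith
qed

lemma orbit_rate:
  assumes "r = real b" "mono_on {0..} \<phi>" "\<phi> (1 / (real k + 1)) > 0"
    and "rate_of_divergence_sq \<gamma> \<theta>"
    and "decseq (\<lambda>n. dist (xs n) (xs (Suc n)) / \<gamma> n)"
    and "n \<ge> Psi b \<theta> \<phi> k"
  shows "dist (xs n) p \<le> 1 / (real k + 1)"
proof (cases "b = 0")
  case True
  then show ?thesis using dist_orbit_le[of n] assms(1) by simp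
next
  case False
  define \<epsilon> where "\<epsilon> = \<phi> (1 / (real k + 1))"
  define M where "M = nat \<lceil>2 * real b / \<epsilon>\<rceil>"
  define N where "N = Sigma_bt b \<theta> M"
  define s where "s i = dist (xs i) (xs (Suc i))" for i
  have "\<epsilon> > 0" using assms(3) by (simp add: \<epsilon>_def)
  have "real b / \<epsilon> \<le> 2 * real b / \<epsilon>" using \<open>\<epsilon> > 0\<close> by (simp add: divide_right_mono)
  also have "\<dots> \<le> real M" unfolding M_def by linarith
  finally have "real b / \<epsilon> \<le> real M" .
  have "real (b\<^sup>2 * (M + 1)\<^sup>2) \<le> (\<Sum>i\<le>N. (\<gamma> i)\<^sup>2)"
    using assms(4) unfolding rate_of_divergence_sq_def N_def Sigma_bt_def by blast
  then have "(real b)\<^sup>2 * (real M + 1)\<^sup>2 \<le> (\<Sum>i\<le>N. (\<gamma> i)\<^sup>2)" by (simp add: add.commute)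
  moreover have "(s N / \<gamma> N)\<^sup>2 * (\<Sum>i\<le>N. (\<gamma> i)\<^sup>2) \<le> (real b)\<^sup>2"
    using sum_sq_ge_of_decseq_ratio[of s \<gamma> N] assms(5) weight_pos sum_steps_sq_le[of "Suc N"]
    by (simp add: s_def lessThan_Suc_atMost assms(1))
  ultimately have "real b * (s N / \<gamma> N) < \<epsilon>"
    using mult_lt_of_sq_bounds[of "s N / \<gamma> N" \<epsilon> "real b"] \<open>real b / \<epsilon> \<le> real M\<close>
      \<open>\<epsilon> > 0\<close> False weight_pos[of N] by (simp add: s_def)
  moreover have "\<phi> (dist (xs (Suc N)) p) \<le> real b * (s N / \<gamma> N)"
    using modulus_term_le_step[of N] weight_pos[of N] assms(1)
    by (simp add: s_def field_simps)
  ultimately have "\<phi> (dist (xs (Suc N)) p) < \<phi> (1 / (real k + 1))"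
    by (simp add: \<epsilon>_def)
  then have "\<not> 1 / (real k + 1) \<le> dist (xs (Suc N)) p"
    using mono_onD[OF assms(2), of "1 / (real k + 1)" "dist (xs (Suc N)) p"] by auto
  moreover have "Psi b \<theta> \<phi> k = Suc N" by (simp add: Psi_def N_def M_def \<epsilon>_def)
  ultimately show ?thesis using dist_orbit_antimono[of "Suc N" n] assms(6) by linarith
qed

end

theorem theorem5p1:
  fixes T :: "nat \<Rightarrow> 'a::complete_space \<Rightarrow> 'a"
    and \<phi> :: "real \<Rightarrow> real" and \<gamma> :: "nat \<Rightarrow> real" and \<theta> :: "nat \<Rightarrow> nat"
    and b :: nat and p x :: 'a and xs :: "nat \<Rightarrow> 'a"
  assumes cat0: "CAT0 TYPE('a)"
    and F_ne: "(\<Inter>n. Fix (T n)) \<noteq> {}"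
    and phi_mono: "mono_on {0..} \<phi>"
    and phi_nonneg: "\<forall>t\<ge>0. \<phi> t \<ge> 0"
    and phi_zero: "\<forall>t\<ge>0. \<phi> t = 0 \<longleftrightarrow> t = 0"
    and gamma_pos: "\<forall>n. \<gamma> n > 0"
    and gamma_div: "\<not> summable (\<lambda>n. (\<gamma> n)\<^sup>2)"
    and theta: "rate_of_divergence_sq \<gamma> \<theta>"
    and pF: "p \<in> (\<Inter>n. Fix (T n))"
    and P2: "\<forall>n. uniformly_P2 (T n) (cball p (real b)) (\<lambda>t. \<gamma> n * \<phi> t)"
    and xC: "x \<in> cball p (real b)"
    and xs0: "xs 0 = x"
    and xsS: "\<forall>n. xs (Suc n) = T n (xs n)"
    and noninc: "\<forall>n. dist (xs (Suc n)) (xs (Suc (Suc n))) / \<gamma> (Suc n)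
                      \<le> dist (xs n) (xs (Suc n)) / \<gamma> n"
  shows "cball p (real b) \<inter> (\<Inter>n. Fix (T n)) = {p}
    \<and> xs \<longlonglongrightarrow> p
    \<and> (\<forall>k n. n \<ge> Psi b \<theta> \<phi> k \<longrightarrow> dist (xs n) p \<le> 1 / (real k + 1))"
proof -
  have fixed: "T n p = p" for n using pF by (auto simp: Fix_def)
  interpret P2_orbit T \<gamma> \<phi> p "real b" xs
  proof
    show "\<And>n. uniformly_P2 (T n) (cball p (real b)) (\<lambda>t. \<gamma> n * \<phi> t)"
      using P2 by blast
    show "\<And>n. 0 < \<gamma> n" using gamma_pos by blast
    show "\<And>t. 0 \<le> t \<Longrightarrow> 0 \<le> \<phi> t" using phi_nonneg by blast
    show "xs 0 \<in> cball p (real b)" using xC xs0 by simp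
  qed (use fixed xsS in blast)+
  have only_p: "q = p" if "q \<in> cball p (real b)" "T 0 q = q" for q
  proof (rule uniformly_P2_fixed_point_unique[OF P2[rule_format, of 0] _ fixed that])
    show "p \<in> cball p (real b)" using that(1) by simp
    show "\<forall>t\<ge>0. \<gamma> 0 * \<phi> t = 0 \<longleftrightarrow> t = 0" using phi_zero gamma_pos[rule_format, of 0] by simp
    show "\<forall>t\<ge>0. \<gamma> 0 * \<phi> t \<ge> 0" using phi_nonneg gamma_pos by (simp add: less_imp_le)
  qed
  have unique: "cball p (real b) \<inter> (\<Inter>n. Fix (T n)) = {p}"
  proof (intro equalityI subsetI)
    fix q assume "q \<in> cball p (real b) \<inter> (\<Inter>n. Fix (T n))"
    then show "q \<in> {p}" using only_p[of q] by (simp add: Fix_def)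
  qed (use pF in simp)
  have rate: "dist (xs n) p \<le> 1 / (real k + 1)" if "n \<ge> Psi b \<theta> \<phi> k" for k n
  proof (rule orbit_rate[OF refl phi_mono _ theta _ that])
    have "1 / (real k + 1) > 0" by simp
    then show "\<phi> (1 / (real k + 1)) > 0"
      using phi_nonneg phi_zero by (simp add: order_less_le)
    show "decseq (\<lambda>n. dist (xs n) (xs (Suc n)) / \<gamma> n)"
      using noninc by (intro decseq_SucI) simp
  qed
  show ?thesis using unique LIMSEQ_of_rate[OF rate] rate by simp
qed

end
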